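(* Let $T$ and $Q$ be selfadjoint bounded operators on a Hilbert space $V$, with $Q$ nonnegative, and let $A:=Q(I+iT)^{-1}$. Then the Cayley transform $C=(I-A)(I+A)^{-1}=(I-Q+iT)(I+Q+iT)^{-1}$ of $A$ is a Ritt operator.
   Context: A bounded operator $C$ is a Ritt operator if $\sigma(C)\subseteq\mathbb{D}\cup\{1\}$, where $\mathbb{D}$ is the open unit disc, and $\sup_{|z|>1}\|(z-1)(z-C)^{-1}\|<\infty$. *)

theory Defs
  imports "HOL-Analysis.Analysis"
begin

text \<open>Complex Hilbert spaces: a real Banach space with a complex scalar
multiplication extending the real one and a complex inner product
(linear in the second argument) inducing the norm.\<close>

class chilbert = banach +
  fixes scaleC :: "complex \<Rightarrow> 'a \<Rightarrow> 'a"  (infixr \<open>*\<^sub>C\<close> 75)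
    and cinner :: "'a \<Rightarrow> 'a \<Rightarrow> complex"
  assumes scaleC_add_right: "a *\<^sub>C (x + y) = a *\<^sub>C x + a *\<^sub>C y"
    and scaleC_add_left: "(a + b) *\<^sub>C x = a *\<^sub>C x + b *\<^sub>C x"
    and scaleC_scaleC: "a *\<^sub>C (b *\<^sub>C x) = (a * b) *\<^sub>C x"
    and scaleC_of_real: "(complex_of_real r) *\<^sub>C x = r *\<^sub>R x"
    and cinner_commute: "cinner x y = cnj (cinner y x)"
    and cinner_add_right: "cinner x (y + z) = cinner x y + cinner x z"
    and cinner_scaleC_right: "cinner x (a *\<^sub>C y) = a * cinner x y"
    and norm_eq_sqrt_cinner: "norm x = sqrt (Re (cinner x x))"

definition cbounded_linear :: "('a::chilbert \<Rightarrow> 'a) \<Rightarrow> bool" where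
  "cbounded_linear T \<longleftrightarrow>
     (\<forall>x y. T (x + y) = T x + T y) \<and> (\<forall>c x. T (c *\<^sub>C x) = c *\<^sub>C T x) \<and>
     (\<exists>K. \<forall>x. norm (T x) \<le> norm x * K)"

definition selfadjoint :: "('a::chilbert \<Rightarrow> 'a) \<Rightarrow> bool" where
  "selfadjoint T \<longleftrightarrow> (\<forall>x y. cinner (T x) y = cinner x (T y))"

definition nonneg_op :: "('a::chilbert \<Rightarrow> 'a) \<Rightarrow> bool" where
  "nonneg_op T \<longleftrightarrow> (\<forall>x. 0 \<le> Re (cinner (T x) x))"

definition op_invertible :: "('a::chilbert \<Rightarrow> 'a) \<Rightarrow> bool" where
  "op_invertible T \<longleftrightarrow> (\<exists>S. cbounded_linear S \<and> S \<circ> T = id \<and> T \<circ> S = id)"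

definition op_inv :: "('a::chilbert \<Rightarrow> 'a) \<Rightarrow> ('a \<Rightarrow> 'a)" where
  "op_inv T = (THE S. cbounded_linear S \<and> S \<circ> T = id \<and> T \<circ> S = id)"

definition op_spectrum :: "('a::chilbert \<Rightarrow> 'a) \<Rightarrow> complex set" where
  "op_spectrum T = {z. \<not> op_invertible (\<lambda>x. z *\<^sub>C x - T x)}"

definition ritt :: "('a::chilbert \<Rightarrow> 'a) \<Rightarrow> bool" where
  "ritt C \<longleftrightarrow> cbounded_linear C \<and>
     op_spectrum C \<subseteq> ball 0 1 \<union> {1} \<and>
     (\<exists>M. \<forall>z. 1 < cmod z \<longrightarrow>
        onorm (\<lambda>x. (z - 1) *\<^sub>C op_inv (\<lambda>v. z *\<^sub>C v - C v) x) \<le> M)"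

end

theory Submission
  imports Defs
begin

(* With S = I + iT one has A = Q S^-1 and C = (S - Q)(S + Q)^-1. Because T is selfadjoint and Q
   is nonnegative, every operator S + sQ with Re s >= 0 is coercive, Re <(S + sQ)x, x> >= |x|^2,
   hence invertible with an inverse of norm at most 1 (Lax-Milgram). For |z| >= 1, z ~= 1,
   z(S + Q) - (S - Q) = (z - 1)(S + sQ) with s = (z + 1)/(z - 1), and Re s = (|z|^2 - 1)/|z - 1|^2 >= 0.
   Therefore (z - 1)(z - C)^-1 = (S + Q)(S + sQ)^-1, whose norm is at most that of S + Q. *)

lemma cinner_add_left: "cinner (x + y) (z::'a::chilbert) = cinner x z + cinner y z"
  by (metis cinner_add_right cinner_commute complex_cnj_add)

lemma cinner_scaleC_left: "cinner (a *\<^sub>C x) (y::'a::chilbert) = cnj a * cinner x y"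
  by (metis cinner_scaleC_right cinner_commute complex_cnj_mult)

lemma cinner_minus_left: "cinner (- x) (y::'a::chilbert) = - cinner x y"
  using cinner_add_left[of x "-x" y] cinner_add_left[of 0 0 y] by (simp add: add_eq_0_iff)

lemma cinner_diff_left: "cinner (x - y) (z::'a::chilbert) = cinner x z - cinner y z"
  using cinner_add_left[of x "-y" z] by (simp add: cinner_minus_left)

lemma scaleC_one [simp]: "1 *\<^sub>C (x::'a::chilbert) = x"
  using scaleC_of_real[of 1 x] by simp

lemma scaleC_minus_left: "(- a) *\<^sub>C (x::'a::chilbert) = - (a *\<^sub>C x)"
  using scaleC_add_left[of a "-a" x] scaleC_of_real[of 0 x] by (simp add: add_eq_0_iff)

lemma scaleC_diff_left: "(a - b) *\<^sub>C (x::'a::chilbert) = a *\<^sub>C x - b *\<^sub>C x"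
  using scaleC_add_left[of a "-b" x] by (simp add: scaleC_minus_left)

lemma scaleC_diff_right: "a *\<^sub>C (x - y::'a::chilbert) = a *\<^sub>C x - a *\<^sub>C y"
  using scaleC_add_right[of a "x - y" y] by (simp add: eq_diff_eq)

lemma power2_norm_eq_cinner: "(norm x)^2 = Re (cinner x (x::'a::chilbert))"
proof -
  have "0 \<le> Re (cinner x x)"
    using norm_eq_sqrt_cinner[of x] by (metis norm_ge_zero real_sqrt_lt_0_iff not_le)
  then show ?thesis by (simp add: norm_eq_sqrt_cinner)
qed

lemma cinner_self_eq_power2_norm: "cinner x (x::'a::chilbert) = complex_of_real ((norm x)^2)"
  using arg_cong[OF cinner_commute[of x x], of Im]
  by (simp add: complex_eq_iff power2_norm_eq_cinner)

lemma norm_scaleC: "norm (a *\<^sub>C (x::'a::chilbert)) = cmod a * norm x"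
proof -
  have "(norm (a *\<^sub>C x))^2 = Re (a * (cnj a * cinner x x))"
    by (simp only: power2_norm_eq_cinner cinner_scaleC_left cinner_scaleC_right)
  also have "a * (cnj a * cinner x x) = complex_of_real ((cmod a)^2 * (norm x)^2)"
    by (subst of_real_mult, subst complex_norm_square) (simp add: cinner_self_eq_power2_norm mult_ac)
  finally have "(norm (a *\<^sub>C x))^2 = (cmod a * norm x)^2"
    by (simp only: Re_complex_of_real power_mult_distrib)
  then show ?thesis
    by (simp add: power2_eq_iff_nonneg)
qed

lemma power2_norm_add:
  "(norm (x + y))^2 = (norm x)^2 + 2 * Re (cinner y x) + (norm (y::'a::chilbert))^2"
  using arg_cong[OF cinner_commute[of x y], of Re]
  by (simp add: power2_norm_eq_cinner cinner_add_left cinner_add_right)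

lemma Im_cinner_selfadjoint: "selfadjoint T \<Longrightarrow> Im (cinner (T x) (x::'a::chilbert)) = 0"
  unfolding selfadjoint_def using arg_cong[OF cinner_commute[of x "T x"], of Im] by simp

lemma cbounded_linear_iff:
  "cbounded_linear T \<longleftrightarrow> bounded_linear T \<and> (\<forall>c x. T (c *\<^sub>C x) = c *\<^sub>C T x)"
proof
  assume "cbounded_linear T"
  then obtain K where "\<And>x y. T (x + y) = T x + T y" "\<And>c x. T (c *\<^sub>C x) = c *\<^sub>C T x"
      "\<And>x. norm (T x) \<le> norm x * K"
    unfolding cbounded_linear_def by blast
  then show "bounded_linear T \<and> (\<forall>c x. T (c *\<^sub>C x) = c *\<^sub>C T x)"
    by (auto intro!: bounded_linear_intro simp flip: scaleC_of_real)
next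
  assume "bounded_linear T \<and> (\<forall>c x. T (c *\<^sub>C x) = c *\<^sub>C T x)"
  then show "cbounded_linear T"
    unfolding cbounded_linear_def
    by (auto simp: linear_add[OF bounded_linear.linear] dest: bounded_linear.bounded)
qed

lemma bounded_linear_scaleC_right: "bounded_linear (\<lambda>x::'a::chilbert. c *\<^sub>C x)"
  by (rule bounded_linear_intro[where K = "cmod c"])
    (simp_all add: scaleC_add_right scaleC_scaleC norm_scaleC mult.commute flip: scaleC_of_real)

lemma cbounded_linear_id: "cbounded_linear (\<lambda>x::'a::chilbert. x)"
  by (simp add: cbounded_linear_iff)

lemma cbounded_linear_add:
  "cbounded_linear S \<Longrightarrow> cbounded_linear T \<Longrightarrow> cbounded_linear (\<lambda>x. S x + T x)"
  by (simp add: cbounded_linear_iff bounded_linear_add scaleC_add_right)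

lemma cbounded_linear_diff:
  "cbounded_linear S \<Longrightarrow> cbounded_linear T \<Longrightarrow> cbounded_linear (\<lambda>x. S x - T x)"
  by (simp add: cbounded_linear_iff bounded_linear_sub scaleC_diff_right)

lemma cbounded_linear_scaleC:
  "cbounded_linear T \<Longrightarrow> cbounded_linear (\<lambda>x. c *\<^sub>C T x)"
  by (simp add: cbounded_linear_iff bounded_linear_compose[OF bounded_linear_scaleC_right]
      scaleC_scaleC mult.commute)

lemma cbounded_linear_comp:
  "cbounded_linear S \<Longrightarrow> cbounded_linear T \<Longrightarrow> cbounded_linear (S \<circ> T)"
  by (simp add: cbounded_linear_iff bounded_linear_compose o_def)

lemma op_invertibleI:
  assumes "cbounded_linear S" "\<And>x. S (T x) = x" "\<And>x. T (S x) = x"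
  shows "op_invertible T" "op_inv T = S"
proof -
  have inverse: "S \<circ> T = id" "T \<circ> S = id"
    using assms(2,3) by (auto simp: fun_eq_iff)
  then show "op_invertible T"
    using assms(1) by (auto simp: op_invertible_def)
  show "op_inv T = S"
    unfolding op_inv_def
  proof (rule the_equality)
    fix S' assume "cbounded_linear S' \<and> S' \<circ> T = id \<and> T \<circ> S' = id"
    then have "S' \<circ> T = id" by blast
    have "S' = S' \<circ> (T \<circ> S)"
      using inverse by simp
    also have "\<dots> = (S' \<circ> T) \<circ> S"
      by (simp add: comp_assoc)
    finally show "S' = S"
      using \<open>S' \<circ> T = id\<close> by simp
  qed (use assms(1) inverse in blast)
qed

lemma op_invertibleD:
  assumes "op_invertible T"
  shows "cbounded_linear (op_inv T)" "op_inv T (T x) = x" "T (op_inv T x) = x"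
proof -
  obtain S where S: "cbounded_linear S" "S \<circ> T = id" "T \<circ> S = id"
    using assms by (auto simp: op_invertible_def)
  then have S_inv: "op_inv T = S"
    by (intro op_invertibleI) (auto simp: fun_eq_iff)
  from S show "cbounded_linear (op_inv T)" "op_inv T (T x) = x" "T (op_inv T x) = x"
    unfolding S_inv by (auto simp: fun_eq_iff)
qed

definition coercive :: "('a::chilbert \<Rightarrow> 'a) \<Rightarrow> bool" where
  "coercive E \<longleftrightarrow> (\<forall>x. (norm x)^2 \<le> Re (cinner (E x) x))"

lemma norm_le_norm_coercive:
  assumes "coercive E"
  shows "norm x \<le> norm (E x)"
proof -
  have "Re (cinner (E x - x) x) = Re (cinner (E x) x) - (norm x)^2"
    by (simp add: cinner_diff_left power2_norm_eq_cinner)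
  moreover have "(norm x)^2 \<le> Re (cinner (E x) x)"
    using assms by (simp add: coercive_def)
  ultimately have "(norm x)^2 \<le> (norm x)^2 + 2 * Re (cinner (E x - x) x) + (norm (E x - x))^2"
    using zero_le_power2[of "norm (E x - x)"] by linarith
  also have "\<dots> = (norm (E x))^2"
    using power2_norm_add[of x "E x - x"] by simp
  finally show ?thesis
    by (rule power2_le_imp_le) simp
qed

lemma power2_norm_diff_scaleR_coercive_le:
  assumes "coercive E" "norm (E w) \<le> M * norm w" "0 \<le> t"
  shows "(norm (w - t *\<^sub>R E w))^2 \<le> (1 - 2 * t + (t * M)^2) * (norm w)^2"
proof -
  have "(norm (w - t *\<^sub>R E w))^2 = (norm w)^2 - 2 * t * Re (cinner (E w) w) + t^2 * (norm (E w))^2"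
    using power2_norm_add[of w "- (t *\<^sub>R E w)"] assms(3)
    by (simp add: cinner_minus_left cinner_scaleC_left norm_scaleC power_mult_distrib
        flip: scaleC_of_real)
  also have "\<dots> \<le> (norm w)^2 - 2 * t * (norm w)^2 + t^2 * (M * norm w)^2"
  proof -
    have "(norm w)^2 \<le> Re (cinner (E w) w)"
      using assms(1) by (simp add: coercive_def)
    moreover have "(norm (E w))^2 \<le> (M * norm w)^2"
      using assms(2) by (simp add: power_mono)
    ultimately have "t^2 * (norm (E w))^2 \<le> t^2 * (M * norm w)^2"
        "2 * t * (norm w)^2 \<le> 2 * t * Re (cinner (E w) w)"
      using assms(3) by (simp_all add: mult_left_mono)
    then show ?thesis by linarith
  qed
  also have "\<dots> = (1 - 2 * t + (t * M)^2) * (norm w)^2"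
    by (simp add: algebra_simps)
  finally show ?thesis .
qed

text \<open>Surjectivity comes from Banach's fixed point theorem: for small \<open>t > 0\<close> the map
  \<open>u \<mapsto> u - t (E u - y)\<close> is a contraction, and its fixed point solves \<open>E u = y\<close>.\<close>

lemma surj_coercive:
  assumes "bounded_linear E" "coercive E"
  shows "surj E"
proof -
  obtain K where K: "0 < K" "\<And>x. norm (E x) \<le> norm x * K"
    using bounded_linear.pos_bounded[OF assms(1)] by blast
  define M where "M = K + 1"
  define t where "t = 1 / M^2"
  have "1 < M" using K(1) by (simp add: M_def)
  then have "1 < M^2" by simp
  then have t: "0 < t" "t < 1" "1 - 2 * t + (t * M)^2 = 1 - t"
    by (auto simp: t_def field_simps power2_eq_square)
  have contraction: "norm (w - t *\<^sub>R E w) \<le> sqrt (1 - t) * norm w" for w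
  proof -
    have "norm (E w) \<le> M * norm w"
      using K(2)[of w] by (simp add: M_def algebra_simps) (use norm_ge_zero[of w] in linarith)
    from power2_norm_diff_scaleR_coercive_le[OF assms(2) this less_imp_le[OF t(1)]]
    have "(norm (w - t *\<^sub>R E w))^2 \<le> (1 - t) * (norm w)^2"
      by (simp only: t(3))
    then have "norm (w - t *\<^sub>R E w) \<le> sqrt ((1 - t) * (norm w)^2)"
      by (rule real_le_rsqrt)
    then show ?thesis
      by (simp add: real_sqrt_mult)
  qed
  show "surj E"
  proof (rule surjI)
    fix y
    define f where "f u = u - t *\<^sub>R (E u - y)" for u
    have "f u - f v = (u - v) - t *\<^sub>R E (u - v)" for u v
      by (simp add: f_def linear_diff[OF bounded_linear.linear[OF assms(1)]] algebra_simps)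
    then have "\<forall>u v. dist (f u) (f v) \<le> sqrt (1 - t) * dist u v"
      using contraction by (simp add: dist_norm)
    then obtain x where "f x = x"
      using banach_fix_type[of "sqrt (1 - t)" f] t by auto
    then have "E x = y"
      using t(1) by (simp add: f_def)
    then show "E (SOME x. E x = y) = y"
      by (rule someI)
  qed
qed

lemma op_invertible_bij:
  assumes E: "cbounded_linear E" and "bij E" and bound: "\<And>y. norm (inv E y) \<le> norm y * K"
  shows "op_invertible E" "op_inv E = inv E"
proof -
  have "inj E"
    using \<open>bij E\<close> by (rule bij_is_inj)
  have E_inv: "E (inv E y) = y" "inv E (E x) = x" for x y
    using \<open>bij E\<close> by (simp_all add: bij_is_surj surj_f_inv_f \<open>inj E\<close>)
  have "cbounded_linear (inv E)"
    unfolding cbounded_linear_def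
  proof (intro conjI allI exI)
    show "inv E (x + y) = inv E x + inv E y" for x y
      using E by (intro inv_f_eq \<open>inj E\<close>) (simp add: cbounded_linear_def E_inv(1))
    show "inv E (c *\<^sub>C x) = c *\<^sub>C inv E x" for c x
      using E by (intro inv_f_eq \<open>inj E\<close>) (simp add: cbounded_linear_def E_inv(1))
    show "norm (inv E x) \<le> norm x * K" for x
      by (rule bound)
  qed
  then show "op_invertible E" "op_inv E = inv E"
    using op_invertibleI E_inv by blast+
qed

lemma coercive_op_invertible:
  assumes "cbounded_linear E" "coercive E"
  shows "op_invertible E" "norm (op_inv E y) \<le> norm y"
proof -
  have "inj E"
  proof (rule injI)
    fix x y assume "E x = E y"
    then have "norm (x - y) \<le> 0"
      using norm_le_norm_coercive[OF assms(2), of "x - y"] assms(1)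
      by (simp add: cbounded_linear_iff linear_diff[OF bounded_linear.linear])
    then show "x = y" by simp
  qed
  moreover have "surj E"
    using assms by (simp add: cbounded_linear_iff surj_coercive)
  ultimately have "bij E"
    by (rule bijI)
  moreover have inv_le: "norm (inv E y) \<le> norm y" for y
    using norm_le_norm_coercive[OF assms(2), of "inv E y"] \<open>surj E\<close> by (simp add: surj_f_inv_f)
  ultimately show "op_invertible E" "norm (op_inv E y) \<le> norm y"
    using op_invertible_bij[OF assms(1), of 1] by simp_all
qed

lemma coercive_add_scaleC:
  assumes "coercive S" "selfadjoint Q" "nonneg_op Q" "0 \<le> Re s"
  shows "coercive (\<lambda>x. S x + s *\<^sub>C Q x)"
  unfolding coercive_def
proof
  fix x
  have "Re (cinner (S x + s *\<^sub>C Q x) x) = Re (cinner (S x) x) + Re s * Re (cinner (Q x) x)"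
    using Im_cinner_selfadjoint[OF assms(2), of x] by (simp add: cinner_add_left cinner_scaleC_left)
  moreover have "0 \<le> Re s * Re (cinner (Q x) x)"
    using assms(3,4) by (simp add: nonneg_op_def)
  ultimately show "(norm x)^2 \<le> Re (cinner (S x + s *\<^sub>C Q x) x)"
    using assms(1) by (simp add: coercive_def add_increasing2)
qed

lemma coercive_add_nonneg:
  "coercive S \<Longrightarrow> selfadjoint Q \<Longrightarrow> nonneg_op Q \<Longrightarrow> coercive (\<lambda>x. S x + Q x)"
  using coercive_add_scaleC[of S Q 1] by simp

lemma coercive_id_add_i_selfadjoint: "selfadjoint T \<Longrightarrow> coercive (\<lambda>x. x + \<i> *\<^sub>C T x)"
  using Im_cinner_selfadjoint[of T]
  by (simp add: coercive_def cinner_add_left cinner_scaleC_left power2_norm_eq_cinner)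

lemma Re_add_one_divide_diff_one_nonneg:
  assumes "1 \<le> cmod z"
  shows "0 \<le> Re ((z + 1) / (z - 1))"
proof -
  have "Re ((z + 1) * cnj (z - 1)) = (cmod z)^2 - 1"
    unfolding cmod_power2 by (simp add: power2_eq_square algebra_simps)
  then have "Re ((z + 1) / (z - 1)) = ((cmod z)^2 - 1) / (cmod (z - 1))^2"
    by (simp add: Re_divide cmod_power2)
  moreover have "1 \<le> (cmod z)^2"
    using assms by simp
  ultimately show ?thesis by simp
qed

lemma cayley_transform_eq_fraction:
  assumes "cbounded_linear S" "op_invertible S" "op_invertible (\<lambda>x. S x + Q x)"
  defines "A \<equiv> Q \<circ> op_inv S"
  shows "op_invertible (\<lambda>x. x + A x)"
    and "(\<lambda>x. x - A x) \<circ> op_inv (\<lambda>x. x + A x) = (\<lambda>x. S x - Q x) \<circ> op_inv (\<lambda>x. S x + Q x)"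
proof -
  let ?P = "\<lambda>x. S x + Q x"
  note S_inv = op_invertibleD[OF assms(2)] and P_inv = op_invertibleD[OF assms(3)]
  have "cbounded_linear (S \<circ> op_inv ?P)"
    by (rule cbounded_linear_comp[OF assms(1) P_inv(1)])
  moreover have "(S \<circ> op_inv ?P) (x + A x) = x" for x
    using P_inv(2)[of "op_inv S x"] by (simp add: A_def S_inv(3))
  moreover have "(S \<circ> op_inv ?P) x + A ((S \<circ> op_inv ?P) x) = x" for x
    by (simp add: A_def S_inv(2) P_inv(3))
  ultimately have "op_invertible (\<lambda>x. x + A x)" "op_inv (\<lambda>x. x + A x) = S \<circ> op_inv ?P"
    by (rule op_invertibleI)+
  then show "op_invertible (\<lambda>x. x + A x)"
    and "(\<lambda>x. x - A x) \<circ> op_inv (\<lambda>x. x + A x) = (\<lambda>x. S x - Q x) \<circ> op_inv ?P"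
    by (auto simp: A_def S_inv(2))
qed

lemma op_inv_resolvent_fraction:
  assumes "cbounded_linear P" "op_invertible P" "op_invertible E" "c \<noteq> 0"
    and pencil: "\<And>v. z *\<^sub>C P v - M v = c *\<^sub>C E v"
  shows "op_invertible (\<lambda>v. z *\<^sub>C v - (M \<circ> op_inv P) v)"
    and "op_inv (\<lambda>v. z *\<^sub>C v - (M \<circ> op_inv P) v) = P \<circ> op_inv E \<circ> (\<lambda>x. inverse c *\<^sub>C x)"
proof -
  let ?R = "\<lambda>v. z *\<^sub>C v - (M \<circ> op_inv P) v"
  note P_inv = op_invertibleD[OF assms(2)] and E_inv = op_invertibleD[OF assms(3)]
  define W where "W = P \<circ> op_inv E \<circ> (\<lambda>x. inverse c *\<^sub>C x)"
  have R_P: "?R (P v) = c *\<^sub>C E v" for v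
    using pencil by (simp add: P_inv(2))
  then have "?R x = c *\<^sub>C E (op_inv P x)" for x
    by (metis P_inv(3))
  then have "W (?R x) = x" for x
    using assms(4) by (simp add: W_def scaleC_scaleC E_inv(2) P_inv(3))
  moreover have "?R (W x) = x" for x
    using assms(4) by (simp add: W_def P_inv(2) pencil E_inv(3) scaleC_scaleC)
  moreover have "cbounded_linear W"
    unfolding W_def
    by (intro cbounded_linear_comp assms(1) E_inv(1) cbounded_linear_scaleC cbounded_linear_id)
  ultimately show "op_invertible ?R" "op_inv ?R = P \<circ> op_inv E \<circ> (\<lambda>x. inverse c *\<^sub>C x)"
    unfolding W_def[symmetric] by (blast intro: op_invertibleI)+
qed

lemma cayley_resolvent_bound:
  assumes "cbounded_linear S" "cbounded_linear Q" "coercive S" "selfadjoint Q" "nonneg_op Q"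
    and "0 \<le> K" "\<And>x. norm (S x + Q x) \<le> K * norm x" "1 \<le> cmod z" "z \<noteq> 1"
  defines "C \<equiv> (\<lambda>x. S x - Q x) \<circ> op_inv (\<lambda>x. S x + Q x)"
  shows "op_invertible (\<lambda>v. z *\<^sub>C v - C v)"
    and "norm ((z - 1) *\<^sub>C op_inv (\<lambda>v. z *\<^sub>C v - C v) x) \<le> K * norm x"
proof -
  let ?P = "\<lambda>x. S x + Q x"
  define E where "E x = S x + ((z + 1) / (z - 1)) *\<^sub>C Q x" for x
  have P: "cbounded_linear ?P" "op_invertible ?P"
    using assms(1-5) by (auto intro!: cbounded_linear_add coercive_op_invertible coercive_add_nonneg)
  have E: "cbounded_linear E" "coercive E"
    using assms Re_add_one_divide_diff_one_nonneg
    by (auto simp: E_def[abs_def] intro!: cbounded_linear_add cbounded_linear_scaleC coercive_add_scaleC)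
  note E_inv = op_invertibleD[OF coercive_op_invertible(1)[OF E]]
  have z1: "z - 1 \<noteq> 0"
    using assms(9) by simp
  have pencil: "z *\<^sub>C ?P v - (S v - Q v) = (z - 1) *\<^sub>C E v" for v
  proof -
    have "(z - 1) * ((z + 1) / (z - 1)) = z + 1"
      using assms(9) by simp
    then show ?thesis
      by (simp add: E_def scaleC_add_right scaleC_diff_left scaleC_scaleC scaleC_add_left
          algebra_simps)
  qed
  note resolvent = op_inv_resolvent_fraction[OF P coercive_op_invertible(1)[OF E] z1 pencil]
  show "op_invertible (\<lambda>v. z *\<^sub>C v - C v)"
    unfolding C_def by (rule resolvent(1))
  have R_inv: "op_inv (\<lambda>v. z *\<^sub>C v - C v) = ?P \<circ> op_inv E \<circ> (\<lambda>x. inverse (z - 1) *\<^sub>C x)"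
    unfolding C_def by (rule resolvent(2))
  have "norm ((z - 1) *\<^sub>C op_inv (\<lambda>v. z *\<^sub>C v - C v) x) = norm (?P (op_inv E x))"
    using cbounded_linear_comp[OF P(1) E_inv(1)] assms(9)
    by (simp add: R_inv cbounded_linear_def scaleC_scaleC)
  also have "\<dots> \<le> K * norm (op_inv E x)"
    by (rule assms(7))
  also have "\<dots> \<le> K * norm x"
    using coercive_op_invertible(2)[OF E] assms(6) by (rule mult_left_mono)
  finally show "norm ((z - 1) *\<^sub>C op_inv (\<lambda>v. z *\<^sub>C v - C v) x) \<le> K * norm x" .
qed

lemma ritt_cayley_transform:
  assumes "cbounded_linear S" "cbounded_linear Q" "coercive S" "selfadjoint Q" "nonneg_op Q"
  shows "ritt ((\<lambda>x. S x - Q x) \<circ> op_inv (\<lambda>x. S x + Q x))" (is "ritt ?C")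
proof -
  let ?P = "\<lambda>x. S x + Q x"
  have P: "cbounded_linear ?P" "coercive ?P"
    using cbounded_linear_add[OF assms(1,2)] coercive_add_nonneg[OF assms(3-5)] .
  obtain K where "0 \<le> K" "\<And>x. norm (?P x) \<le> norm x * K"
    using bounded_linear.nonneg_bounded P(1) unfolding cbounded_linear_iff by blast
  then have K: "0 \<le> K" "\<And>x. norm (?P x) \<le> K * norm x"
    by (simp_all add: mult.commute)
  note resolvent = cayley_resolvent_bound[OF assms K]
  show ?thesis
    unfolding ritt_def
  proof (intro conjI exI allI impI subsetI)
    show "cbounded_linear ?C"
      using assms(1,2) coercive_op_invertible(1)[OF P]
      by (intro cbounded_linear_comp cbounded_linear_diff op_invertibleD(1))
  next
    fix z assume "z \<in> op_spectrum ?C"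
    then have "\<not> op_invertible (\<lambda>v. z *\<^sub>C v - ?C v)"
      by (simp add: op_spectrum_def)
    then have "cmod z < 1 \<or> z = 1"
      using resolvent(1)[of z] by fastforce
    then show "z \<in> ball 0 1 \<union> {1}"
      by auto
  next
    fix z :: complex assume "1 < cmod z"
    then have "1 \<le> cmod z" "z \<noteq> 1"
      by auto
    then show "onorm (\<lambda>x. (z - 1) *\<^sub>C op_inv (\<lambda>v. z *\<^sub>C v - ?C v) x) \<le> K"
      by (intro onorm_bound K(1) resolvent(2))
  qed
qed

theorem lemma2p4:
  fixes T Q :: "'a::chilbert \<Rightarrow> 'a"
  assumes "cbounded_linear T" and "selfadjoint T"
    and "cbounded_linear Q" and "selfadjoint Q" and "nonneg_op Q"
  defines "A \<equiv> Q \<circ> op_inv (\<lambda>x. x + \<i> *\<^sub>C T x)"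
  defines "C \<equiv> (\<lambda>x. x - A x) \<circ> op_inv (\<lambda>x. x + A x)"
  shows "op_invertible (\<lambda>x. x + \<i> *\<^sub>C T x) \<and> op_invertible (\<lambda>x. x + A x)
    \<and> C = (\<lambda>x. x - Q x + \<i> *\<^sub>C T x) \<circ> op_inv (\<lambda>x. x + Q x + \<i> *\<^sub>C T x)
    \<and> ritt C"
proof -
  let ?S = "\<lambda>x. x + \<i> *\<^sub>C T x"
  have S: "cbounded_linear ?S" "coercive ?S"
    using cbounded_linear_add[OF cbounded_linear_id cbounded_linear_scaleC[OF assms(1)]]
      coercive_id_add_i_selfadjoint[OF assms(2)] .
  have S_inv: "op_invertible ?S"
    by (rule coercive_op_invertible(1)[OF S])
  have P_inv: "op_invertible (\<lambda>x. ?S x + Q x)"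
    using cbounded_linear_add[OF S(1) assms(3)] coercive_add_nonneg[OF S(2) assms(4,5)]
    by (rule coercive_op_invertible(1))
  have "(\<lambda>x. x - Q x + \<i> *\<^sub>C T x) = (\<lambda>x. ?S x - Q x)"
    and "(\<lambda>x. x + Q x + \<i> *\<^sub>C T x) = (\<lambda>x. ?S x + Q x)"
    by (simp_all add: fun_eq_iff algebra_simps)
  with cayley_transform_eq_fraction[OF S(1) S_inv P_inv]
    ritt_cayley_transform[OF S(1) assms(3) S(2) assms(4,5)]
  show ?thesis
    using S_inv unfolding A_def C_def by simp
qed

end
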